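(* Let $N\ge2$, $R>0$, let $g:[0,R]\to(0,\infty)$ be smooth, and let $A,B,p,q$ be positive constants with $0<A<B$, all independent of $\epsilon$. For $\epsilon>0$ let $U_\epsilon$ be the unique solution of problem (N* ) described in the context. Then for every $\kappa\in(0,1)$ there is a constant $\widetilde C_{10}>0$ independent of $\epsilon$ such that for all sufficiently small $\epsilon>0$, $$\Big|\int_0^Rs^{N-1}e^{pU_\epsilon(s)}ds-\frac{R^N}{N}\Big|+\Big|\int_0^Rs^{N-1}e^{-qU_\epsilon(s)}ds-\frac{BR^N}{AN}\Big|\le\widetilde C_{10}\,\epsilon^\kappa\log\frac1\epsilon.$$
   Context: Problem (N* ): for $\epsilon>0$, find $U_\epsilon\in C^1([0,R])\cap C^\infty((0,R))$ such that for $r\in(0,R)$ $$\epsilon^2 g(r)\Big[U_\epsilon''(r)+\Big(\frac{N-1}{r}+\frac{g'(r)}{g(r)}\Big)U_\epsilon'(r)\Big]=\frac{R^N}{N}\Big(\frac{Ae^{pU_\epsilon(r)}}{\int_0^R s^{N-1}e^{pU_\epsilon(s)}ds}-\frac{Be^{-qU_\epsilon(r)}}{\int_0^R s^{N-1}e^{-qU_\epsilon(s)}ds}\Big),$$ together with $\int_0^R s^{N-1}U_\epsilon(s)\,ds=0$, $U_\epsilon'(0)=0$ and $U_\epsilon'(R)=\frac{R(A-B)}{\epsilon^2Ng(R)}$; it has a unique solution. *)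

theory Defs
  imports "HOL-Analysis.Analysis"
begin

definition smooth_on :: "real set \<Rightarrow> (real \<Rightarrow> real) \<Rightarrow> bool" where
  "smooth_on S f \<longleftrightarrow> (\<exists>D :: nat \<Rightarrow> real \<Rightarrow> real.
      (\<forall>x\<in>S. D 0 x = f x) \<and>
      (\<forall>k. \<forall>x\<in>S. (D k has_real_derivative D (Suc k) x) (at x within S)))"

definition solves_Nstar ::
  "nat \<Rightarrow> real \<Rightarrow> (real \<Rightarrow> real) \<Rightarrow> real \<Rightarrow> real \<Rightarrow> real \<Rightarrow> real \<Rightarrow> real
     \<Rightarrow> (real \<Rightarrow> real) \<Rightarrow> bool" where
  "solves_Nstar N R g A B p q \<epsilon> U \<longleftrightarrow>
    (\<exists>U1. (\<forall>x\<in>{0..R}. (U has_real_derivative U1 x) (at x within {0..R})) \<and>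
          continuous_on {0..R} U1 \<and>
          U1 0 = 0 \<and>
          U1 R = R * (A - B) / (\<epsilon>\<^sup>2 * real N * g R)) \<and>
    smooth_on {0<..<R} U \<and>
    integral {0..R} (\<lambda>s. s ^ (N - 1) * U s) = 0 \<and>
    (\<forall>r\<in>{0<..<R}.
       \<epsilon>\<^sup>2 * g r * (deriv (deriv U) r + ((real N - 1) / r + deriv g r / g r) * deriv U r)
       = R ^ N / real N *
         (A * exp (p * U r) / integral {0..R} (\<lambda>s. s ^ (N - 1) * exp (p * U s))
          - B * exp (- q * U r) / integral {0..R} (\<lambda>s. s ^ (N - 1) * exp (- q * U s))))"

end

theory Submission
  imports Defs "HOL-Real_Asymp.Real_Asymp"
begin

(* With K = R^N/N, a = A / (integral of s^(N-1) e^(pU)) and b = B / (integral of s^(N-1) e^(-qU)),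
   the equation says that the flux Z = -eps^2 r^(N-1) g U' satisfies
   Z' = r^(N-1) K (b e^(-qU) - a e^(pU)).  Let c be the level at which the right-hand side
   vanishes.  A maximum principle gives U <= c, so Z increases from Z(0) = 0 to
   Z(R) = K (B - A) and U decreases.  Integrating across the boundary layer at R bounds
   c - U(R) by O(log(1/eps)); away from R, comparison with the linear equation
   eps^2 V'' ~ V for V = c - U shows that V shrinks by the factor eps^(2 - 2 kappa) over
   every two steps of length eps^kappa, so after boundedly many steps V is O(eps^kappa) times
   its boundary value.  Since U has weighted mean zero, K c is the weighted integral of V,
   hence c = O(eps^kappa log(1/eps)), and both integrals differ from their limits
   R^N/N and B R^N/(A N) by O(c). *)

lemma mvt_has_real_derivative:
  fixes f f' :: "real \<Rightarrow> real"
  assumes "a < b" "continuous_on {a..b} f"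
    and "\<And>x. a < x \<Longrightarrow> x < b \<Longrightarrow> (f has_real_derivative f' x) (at x)"
  obtains \<xi> where "a < \<xi>" "\<xi> < b" "f b - f a = f' \<xi> * (b - a)"
proof -
  have "\<And>x. a < x \<Longrightarrow> x < b \<Longrightarrow> (f has_derivative (*) (f' x)) (at x)"
    using assms(3) by (simp add: has_field_derivative_def)
  from mvt[OF assms(1,2) this] show ?thesis
    using that by blast
qed

lemma smooth_on_has_real_derivative:
  assumes "smooth_on S f"
  obtains f' where "\<And>x. x \<in> S \<Longrightarrow> (f has_real_derivative f' x) (at x within S)"
proof -
  from assms obtain D where D0: "\<forall>x\<in>S. D 0 x = f x"
    and D: "\<forall>k. \<forall>x\<in>S. (D k has_real_derivative D (Suc k) x) (at x within S)"
    unfolding smooth_on_def by blast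
  have "(f has_real_derivative D 1 x) (at x within S)" if x: "x \<in> S" for x
  proof (rule has_field_derivative_transform_within[where d=1])
    show "(D 0 has_real_derivative D 1 x) (at x within S)" using D x by simp
  qed (use x D0 in auto)
  then show ?thesis using that by blast
qed

lemma smooth_on_open_deriv:
  assumes "smooth_on S f" "open S" "x \<in> S"
  shows "(f has_real_derivative deriv f x) (at x)"
    and "(deriv f has_real_derivative deriv (deriv f) x) (at x)"
proof -
  from assms(1) obtain D where D0: "\<forall>x\<in>S. D 0 x = f x"
    and D: "\<forall>k. \<forall>x\<in>S. (D k has_real_derivative D (Suc k) x) (at x within S)"
    unfolding smooth_on_def by blast
  have D_at: "(D k has_real_derivative D (Suc k) y) (at y)" if "y \<in> S" for k y
    using D that at_within_open[OF that assms(2)] by metis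
  have f1: "(f has_real_derivative D (Suc 0) y) (at y)" if "y \<in> S" for y
    by (rule has_field_derivative_transform_within_open[OF D_at[OF that, of 0] assms(2) that])
      (use D0 in auto)
  have "(deriv f has_real_derivative D (Suc (Suc 0)) x) (at x)"
    by (rule has_field_derivative_transform_within_open[OF D_at[OF assms(3), of "Suc 0"] assms(2,3)])
      (use f1 DERIV_imp_deriv in metis)
  then show "(deriv f has_real_derivative deriv (deriv f) x) (at x)"
    using DERIV_imp_deriv by metis
  show "(f has_real_derivative deriv f x) (at x)"
    using f1[OF assms(3)] DERIV_imp_deriv by metis
qed

lemma has_integral_power_Icc0:
  assumes "N \<ge> 1" "R \<ge> 0"
  shows "((\<lambda>s::real. s ^ (N - 1)) has_integral R ^ N / real N) {0..R}"
proof -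
  have "((\<lambda>s::real. s ^ (N - 1)) has_integral (R ^ N / real N - 0 ^ N / real N)) {0..R}"
  proof (rule fundamental_theorem_of_calculus)
    fix x :: real
    have "((\<lambda>s::real. s ^ N / real N) has_real_derivative (real N * x ^ (N - 1) / real N))
        (at x within {0..R})"
      by (auto intro!: derivative_eq_intros)
    then show "((\<lambda>s::real. s ^ N / real N) has_vector_derivative x ^ (N - 1)) (at x within {0..R})"
      using assms by (simp add: has_real_derivative_iff_has_vector_derivative)
  qed (use assms in simp)
  then show ?thesis using assms by (simp add: power_0_left)
qed

lemma power_ratio_powr_le:
  fixes \<epsilon> \<kappa> :: real
  assumes "0 < \<epsilon>" "\<epsilon> < 1" "\<kappa> \<le> real k * (2 - 2 * \<kappa>)"
  shows "(\<epsilon>\<^sup>2 / (\<epsilon> powr \<kappa>)\<^sup>2) ^ k \<le> \<epsilon> powr \<kappa>"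
proof -
  have "\<epsilon>\<^sup>2 / (\<epsilon> powr \<kappa>)\<^sup>2 = \<epsilon> powr (2 - 2 * \<kappa>)"
    using assms(1) powr_realpow[of \<epsilon> 2] powr_power[of \<epsilon> \<kappa> 2] by (simp add: powr_diff)
  then have "(\<epsilon>\<^sup>2 / (\<epsilon> powr \<kappa>)\<^sup>2) ^ k = \<epsilon> powr (real k * (2 - 2 * \<kappa>))"
    using assms(1) powr_power[of \<epsilon> "2 - 2 * \<kappa>" k] by simp
  also have "\<dots> \<le> \<epsilon> powr \<kappa>"
    using assms by (intro powr_mono') auto
  finally show ?thesis .
qed

section \<open>Constants independent of \<open>\<epsilon>\<close>\<close>

locale radial_data =
  fixes N :: nat and R A B p q gmin gmax :: real and g g' :: "real \<Rightarrow> real"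
  assumes N_ge_2: "N \<ge> 2" and R_pos: "R > 0" and A_pos: "0 < A" and A_less_B: "A < B"
    and p_pos: "p > 0" and q_pos: "q > 0" and gmin_pos: "0 < gmin"
    and g_bounds: "\<And>x. x \<in> {0..R} \<Longrightarrow> gmin \<le> g x \<and> g x \<le> gmax"
    and g_deriv: "\<And>x. x \<in> {0..R} \<Longrightarrow> (g has_real_derivative g' x) (at x within {0..R})"
begin

definition "K = R ^ N / real N"

lemma K_pos: "K > 0"
  using R_pos N_ge_2 by (simp add: K_def)

lemma g_pos: "x \<in> {0..R} \<Longrightarrow> g x > 0"
  using g_bounds gmin_pos by force

lemma g_cont: "continuous_on {0..R} g"
  using g_deriv by (intro DERIV_continuous_on) blast

lemma integrable_weighted:
  assumes "continuous_on {0..R} f"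
  shows "(\<lambda>s. s ^ (N - 1) * f s) integrable_on {0..R}"
  by (rule integrable_continuous_interval) (intro continuous_intros assms)

lemma integral_weighted_const: "integral {0..R} (\<lambda>s. s ^ (N - 1) * C) = K * C"
proof -
  have "((\<lambda>s. s ^ (N - 1) * C) has_integral (R ^ N / real N) * C) {0..R}"
    using has_integral_mult_left[OF has_integral_power_Icc0[of N R]] N_ge_2 R_pos by simp
  then show ?thesis unfolding K_def by (rule integral_unique)
qed

lemma integral_weighted_mono:
  assumes "continuous_on {0..R} f" "continuous_on {0..R} h" "\<And>s. s \<in> {0..R} \<Longrightarrow> f s \<le> h s"
  shows "integral {0..R} (\<lambda>s. s ^ (N - 1) * f s) \<le> integral {0..R} (\<lambda>s. s ^ (N - 1) * h s)"
  using assms(3) by (intro integral_le integrable_weighted assms(1,2)) (auto intro: mult_left_mono)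

lemma integral_weighted_pos:
  assumes "continuous_on {0..R} f" "\<And>s. s \<in> {0..R} \<Longrightarrow> f s > 0"
  shows "integral {0..R} (\<lambda>s. s ^ (N - 1) * f s) > 0"
proof -
  obtain x0 where x0: "x0 \<in> {0..R}" "\<And>y. y \<in> {0..R} \<Longrightarrow> f x0 \<le> f y"
    using continuous_attains_inf[OF compact_Icc _ assms(1)] R_pos by auto
  have "0 < K * f x0"
    using K_pos assms(2)[OF x0(1)] by simp
  also have "\<dots> \<le> integral {0..R} (\<lambda>s. s ^ (N - 1) * f s)"
    unfolding integral_weighted_const[symmetric] using x0 by (intro integral_weighted_mono assms(1)) auto
  finally show ?thesis .
qed

definition "wmin = (R / 2) ^ (N - 1) * gmin"

definition "wmax = R ^ (N - 1) * gmax"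

lemma weight_bounds:
  assumes "x \<in> {R/2..R}"
  shows "wmin \<le> x ^ (N - 1) * g x" "x ^ (N - 1) * g x \<le> wmax"
proof -
  have g: "gmin \<le> g x" "g x \<le> gmax" using g_bounds assms R_pos by auto
  have "(R/2) ^ (N - 1) \<le> x ^ (N - 1)" "x ^ (N - 1) \<le> R ^ (N - 1)"
    using assms R_pos by (auto intro: power_mono)
  then show "wmin \<le> x ^ (N - 1) * g x" "x ^ (N - 1) * g x \<le> wmax"
    unfolding wmax_def wmin_def using g gmin_pos R_pos assms by (auto intro!: mult_mono)
qed

lemma wmin_pos: "wmin > 0"
  unfolding wmin_def using R_pos gmin_pos by simp

lemma wmax_pos: "wmax > 0"
  using g_bounds[of R] g_pos[of R] R_pos unfolding wmax_def by force

definition "lam = (R / 2) ^ (N - 1) * A * q"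

lemma lam_pos: "lam > 0"
  unfolding lam_def using R_pos A_pos q_pos by simp

text \<open>\<open>slope / \<epsilon>\<^sup>2\<close> bounds \<open>\<bar>U'\<bar>\<close> on \<open>[R/2, R]\<close>:
  the flux is at most \<open>K * (B - A)\<close> and the weight \<open>r ^ (N - 1) * g r\<close> at least \<open>wmin\<close>.\<close>

definition "slope = K * (B - A) / wmin"

definition "C_layer = K * (B - A) * slope / ((R / 2) ^ (N - 1) * A)"

definition "C_log = 1 + ln (1 + C_layer) / q + 2 / q"

definition "C_excess k = R ^ (N - 1) * (R * (wmax / lam) ^ k + 2 * real k) * C_log / K"

definition "C_final k = (2 * p + B / A * (4 * p + 2 * q)) * K * C_excess k"

lemma slope_pos: "slope > 0"
  unfolding slope_def using K_pos A_less_B wmin_pos by simp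

lemma C_layer_nonneg: "C_layer \<ge> 0"
  unfolding C_layer_def using K_pos A_less_B slope_pos R_pos A_pos by simp

lemma C_final_pos: "C_final k > 0"
proof -
  have "C_log > 0"
    unfolding C_log_def using C_layer_nonneg q_pos by (simp add: add_pos_nonneg)
  then have "C_excess k > 0"
    unfolding C_excess_def using R_pos K_pos wmax_pos lam_pos by (simp add: add_pos_nonneg)
  moreover have "2 * p + B / A * (4 * p + 2 * q) > 0"
    using p_pos q_pos A_pos A_less_B by (intro add_pos_pos mult_pos_pos divide_pos_pos) auto
  ultimately show ?thesis
    unfolding C_final_def using K_pos by simp
qed

end

locale radial_solution = radial_data +
  fixes \<epsilon> :: real and U U' U'' :: "real \<Rightarrow> real"
  assumes eps_pos: "\<epsilon> > 0"
    and U_deriv: "\<And>x. x \<in> {0..R} \<Longrightarrow> (U has_real_derivative U' x) (at x within {0..R})"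
    and U'_cont: "continuous_on {0..R} U'"
    and U'_0: "U' 0 = 0"
    and U'_R: "U' R = R * (A - B) / (\<epsilon>\<^sup>2 * real N * g R)"
    and U'_deriv: "\<And>x. x \<in> {0<..<R} \<Longrightarrow> (U' has_real_derivative U'' x) (at x)"
    and mean_zero: "integral {0..R} (\<lambda>s. s ^ (N - 1) * U s) = 0"
    and ode: "\<And>r. r \<in> {0<..<R} \<Longrightarrow>
       \<epsilon>\<^sup>2 * g r * (U'' r + ((real N - 1) / r + g' r / g r) * U' r)
       = R ^ N / real N *
         (A * exp (p * U r) / integral {0..R} (\<lambda>s. s ^ (N - 1) * exp (p * U s))
          - B * exp (- q * U r) / integral {0..R} (\<lambda>s. s ^ (N - 1) * exp (- q * U s)))"
begin

definition "Ip = integral {0..R} (\<lambda>s. s ^ (N - 1) * exp (p * U s))"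

definition "Iq = integral {0..R} (\<lambda>s. s ^ (N - 1) * exp (- q * U s))"

definition "a = A / Ip"

definition "b = B / Iq"

text \<open>The level at which the two exponential terms balance: \<open>a * exp (p * c) = b * exp (- q * c)\<close>.\<close>

definition "c = ln (b / a) / (p + q)"
definition "m = a * exp (p * c)"

definition "flux r = - (\<epsilon>\<^sup>2 * r ^ (N - 1) * g r * U' r)"
definition "source r = r ^ (N - 1) * K * (b * exp (- q * U r) - a * exp (p * U r))"

lemma U_cont: "continuous_on {0..R} U"
  using U_deriv by (intro DERIV_continuous_on) blast

lemma U_has_derivative_at: "x \<in> {0<..<R} \<Longrightarrow> (U has_real_derivative U' x) (at x)"
  using U_deriv[of x] by (simp add: at_within_Icc_at)

lemma Ip_pos: "Ip > 0"
  unfolding Ip_def by (rule integral_weighted_pos) (auto intro!: continuous_intros U_cont)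

lemma Iq_pos: "Iq > 0"
  unfolding Iq_def by (rule integral_weighted_pos) (auto intro!: continuous_intros U_cont)

lemma a_pos: "a > 0"
  using Ip_pos A_pos by (simp add: a_def)

lemma b_pos: "b > 0"
  using Iq_pos A_pos A_less_B by (simp add: b_def)

lemma m_pos: "m > 0"
  using a_pos by (simp add: m_def)

lemma a_eq: "a = m * exp (- p * c)"
  unfolding m_def by (simp add: exp_minus)

lemma b_eq: "b = m * exp (q * c)"
proof -
  have "exp ((p + q) * c) = b / a"
    unfolding c_def using p_pos q_pos a_pos b_pos by simp
  then show ?thesis
    using a_pos unfolding m_def by (simp add: distrib_right exp_add field_simps)
qed

lemma source_eq: "source r = r ^ (N - 1) * K * m * (exp (q * (c - U r)) - exp (- p * (c - U r)))"
proof -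
  have "b * exp (- q * U r) = m * exp (q * (c - U r))"
    unfolding b_eq by (simp add: mult.assoc exp_add[symmetric] algebra_simps)
  moreover have "a * exp (p * U r) = m * exp (- p * (c - U r))"
    unfolding a_eq by (simp add: mult.assoc exp_add[symmetric] algebra_simps)
  ultimately show ?thesis
    unfolding source_def by (simp add: algebra_simps)
qed

lemma flux_has_derivative: "r \<in> {0<..<R} \<Longrightarrow> (flux has_real_derivative source r) (at r)"
proof -
  assume r: "r \<in> {0<..<R}"
  have g_at: "(g has_real_derivative g' r) (at r)"
    using g_deriv[of r] r by (simp add: at_within_Icc_at)
  define D where "D = real (N - 1) * r ^ (N - 1 - 1) * g r * U' r + r ^ (N - 1) * g' r * U' r
    + r ^ (N - 1) * g r * U'' r"
  have "((\<lambda>r. r ^ (N - 1) * g r * U' r) has_real_derivative D) (at r)"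
    unfolding D_def using g_at U'_deriv[OF r] by (auto intro!: derivative_eq_intros simp: algebra_simps)
  then have flux_D: "(flux has_real_derivative - (\<epsilon>\<^sup>2 * D)) (at r)"
    unfolding flux_def using DERIV_minus[OF DERIV_cmult] by (simp add: mult.assoc)
  have "r ^ (N - 1) = r * r ^ (N - 1 - 1)" "real (N - 1) = real N - 1"
    using N_ge_2 power_minus_mult[of "N - 1" r] by (simp_all add: mult.commute)
  then have "- (\<epsilon>\<^sup>2 * D)
      = - (r ^ (N - 1)) * (\<epsilon>\<^sup>2 * g r * (U'' r + ((real N - 1) / r + g' r / g r) * U' r))"
    using r g_pos[of r] unfolding D_def by (simp add: field_simps)
  also have "\<dots> = source r"
  proof -
    have "R ^ N / real N * (A * exp (p * U r) / Ip - B * exp (- q * U r) / Iq)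
        = K * (a * exp (p * U r) - b * exp (- q * U r))"
      by (simp add: K_def a_def b_def)
    then have balance: "\<epsilon>\<^sup>2 * g r * (U'' r + ((real N - 1) / r + g' r / g r) * U' r)
        = K * (a * exp (p * U r) - b * exp (- q * U r))"
      using ode[OF r] unfolding Ip_def Iq_def by simp
    show ?thesis
      unfolding balance source_def by (simp add: algebra_simps)
  qed
  finally show ?thesis
    using flux_D by simp
qed

lemma flux_cont: "continuous_on {0..R} flux"
  unfolding flux_def by (intro continuous_intros g_cont U'_cont)

lemma flux_0: "flux 0 = 0"
  by (simp add: flux_def U'_0)

lemma flux_R: "flux R = K * (B - A)"
proof -
  have "R ^ (N - 1) * R = R ^ N"
    using N_ge_2 power_minus_mult[of N R] by simp
  then show ?thesis
    using g_pos[of R] R_pos eps_pos N_ge_2 unfolding flux_def U'_R K_def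
    by (auto simp: field_simps power2_eq_square)
qed

lemma U'_eq_flux: "r \<in> {0<..R} \<Longrightarrow> U' r = - flux r / (\<epsilon>\<^sup>2 * r ^ (N - 1) * g r)"
  using g_pos[of r] eps_pos unfolding flux_def by (simp add: field_simps)

subsection \<open>Maximum principle\<close>

lemma U'_R_neg: "U' R < 0"
proof -
  have "\<epsilon>\<^sup>2 * real N * g R > 0"
    using g_pos[of R] R_pos eps_pos N_ge_2 by simp
  moreover have "R * (A - B) < 0"
    using R_pos A_less_B by (simp add: mult_pos_neg)
  ultimately show ?thesis
    unfolding U'_R by (simp add: divide_neg_pos)
qed

lemma U_not_max_at_R: "\<exists>s\<in>{0..<R}. U R < U s"
proof -
  obtain d where d: "d > 0" "\<And>h. h > 0 \<Longrightarrow> R - h \<in> {0..R} \<Longrightarrow> h < d \<Longrightarrow> U R < U (R - h)"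
    using has_real_derivative_neg_dec_left[OF U_deriv U'_R_neg] R_pos by auto
  define h where "h = min (d / 2) R"
  have "U R < U (R - h)" "R - h \<in> {0..<R}"
    using d R_pos by (auto simp: h_def intro!: d(2))
  then show ?thesis by blast
qed

lemma flux_zero_at_max:
  assumes x0: "x0 \<in> {0..<R}" and max: "\<And>y. y \<in> {0..R} \<Longrightarrow> U y \<le> U x0"
  shows "flux x0 = 0"
proof (cases "x0 = 0")
  case False
  then have x0': "x0 \<in> {0<..<R}" using x0 by auto
  have "U' x0 = 0"
  proof (rule DERIV_local_max[OF U_has_derivative_at[OF x0']])
    show "0 < min x0 (R - x0)" using x0' by simp
    show "\<forall>y. \<bar>x0 - y\<bar> < min x0 (R - x0) \<longrightarrow> U y \<le> U x0"
      by (auto simp: abs_less_iff intro!: max)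
  qed
  then show ?thesis by (simp add: flux_def)
qed (simp add: flux_0)

lemma source_neg:
  assumes "r > 0" "U r > c"
  shows "source r < 0"
proof -
  have "exp (q * (c - U r)) < 1" "1 < exp (- p * (c - U r))"
    using assms p_pos q_pos by (auto simp: mult_pos_neg)
  then show ?thesis
    unfolding source_eq using K_pos m_pos assms by (simp add: mult_pos_neg)
qed

text \<open>Where \<open>U > c\<close> the flux decreases, so starting from a zero of the flux \<open>U\<close> increases.\<close>

lemma U_increases_from_flux_zero:
  assumes x0: "x0 \<in> {0..<R}" and flux: "flux x0 = 0" and above: "U x0 > c"
  obtains y where "y \<in> {0..R}" "U y > U x0"
proof -
  obtain d where d: "d > 0" "\<And>y. y \<in> {0..R} \<Longrightarrow> dist y x0 < d \<Longrightarrow> dist (U y) (U x0) < U x0 - c"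
    using U_cont x0 above unfolding continuous_on_iff by (metis atLeastLessThan_iff
        atLeastAtMost_iff diff_gt_0_iff_gt less_eq_real_def)
  define y where "y = min (x0 + d / 2) R"
  have y: "x0 < y" "y \<le> R" using d x0 by (auto simp: y_def)
  obtain \<xi> where \<xi>: "x0 < \<xi>" "\<xi> < y" "U y - U x0 = U' \<xi> * (y - x0)"
    using mvt_has_real_derivative[OF y(1) continuous_on_subset[OF U_cont], of U'] y x0
      U_has_derivative_at by auto
  obtain \<eta> where \<eta>: "x0 < \<eta>" "\<eta> < \<xi>" "flux \<xi> - flux x0 = source \<eta> * (\<xi> - x0)"
    using mvt_has_real_derivative[OF \<xi>(1) continuous_on_subset[OF flux_cont], of source]
      \<xi> y x0 flux_has_derivative by auto
  have "U \<eta> > c"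
    using d(2)[of \<eta>] \<eta> \<xi> y x0 by (auto simp: dist_real_def y_def)
  then have "source \<eta> < 0"
    using source_neg \<eta> x0 by simp
  then have "flux \<xi> < 0"
    using \<eta> flux by (simp add: mult_neg_pos)
  then have "U' \<xi> > 0"
    using U'_eq_flux[of \<xi>] \<xi> y x0 g_pos[of \<xi>] eps_pos by (simp add: divide_neg_pos)
  then have "U y > U x0"
    using \<xi> mult_pos_pos[of "U' \<xi>" "y - x0"] by linarith
  with y x0 show ?thesis
    using that[of y] by simp
qed

lemma U_le_c: "x \<in> {0..R} \<Longrightarrow> U x \<le> c"
proof (rule ccontr)
  assume x: "x \<in> {0..R}" and "\<not> U x \<le> c"
  obtain x0 where x0: "x0 \<in> {0..R}" and max: "\<And>y. y \<in> {0..R} \<Longrightarrow> U y \<le> U x0"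
    using continuous_attains_sup[OF compact_Icc _ U_cont] R_pos by auto
  have above: "U x0 > c"
    using max[OF x] \<open>\<not> U x \<le> c\<close> by simp
  have "x0 \<noteq> R"
    using U_not_max_at_R max by fastforce
  then have x0': "x0 \<in> {0..<R}"
    using x0 by simp
  obtain y where "y \<in> {0..R}" "U y > U x0"
    using U_increases_from_flux_zero[OF x0' flux_zero_at_max[OF x0' max] above] .
  with max show False by fastforce
qed

lemma source_ge_exp:
  assumes "r \<in> {0..R}"
  shows "r ^ (N - 1) * K * m * (exp (q * (c - U r)) - 1) \<le> source r"
proof -
  have "exp (- p * (c - U r)) \<le> 1"
    using U_le_c[OF assms] p_pos by (simp add: mult_nonneg_nonneg)
  then show ?thesis
    unfolding source_eq using assms K_pos m_pos by (intro mult_left_mono) auto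
qed

lemma source_ge_linear:
  assumes "r \<in> {0..R}"
  shows "r ^ (N - 1) * K * m * (q * (c - U r)) \<le> source r"
proof -
  have "q * (c - U r) \<le> exp (q * (c - U r)) - 1"
    using exp_ge_add_one_self[of "q * (c - U r)"] by linarith
  then show ?thesis
    using source_ge_exp[OF assms] assms K_pos m_pos
    by (meson mult_left_mono order_trans zero_le_mult_iff zero_le_power atLeastAtMost_iff less_le)
qed

lemma source_nonneg: "r \<in> {0..R} \<Longrightarrow> source r \<ge> 0"
  using source_ge_linear[of r] U_le_c[of r] K_pos m_pos q_pos
  by (smt (verit) atLeastAtMost_iff mult_nonneg_nonneg zero_le_power)

lemma flux_mono:
  assumes "0 \<le> x" "x \<le> y" "y \<le> R"
  shows "flux x \<le> flux y"
proof (rule DERIV_nonneg_imp_increasing_open[of x y flux])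
  show "\<exists>d. (flux has_real_derivative d) (at t) \<and> 0 \<le> d" if "x < t" "t < y" for t
    using flux_has_derivative[of t] source_nonneg[of t] that assms by auto
qed (use assms in \<open>auto intro: continuous_on_subset[OF flux_cont]\<close>)

lemma flux_nonneg: "x \<in> {0..R} \<Longrightarrow> flux x \<ge> 0"
  using flux_mono[of 0 x] flux_0 by simp

lemma flux_le: "x \<in> {0..R} \<Longrightarrow> flux x \<le> K * (B - A)"
  using flux_mono[of x R] flux_R by simp

lemma U'_nonpos: "r \<in> {0<..R} \<Longrightarrow> U' r \<le> 0"
  using U'_eq_flux[of r] flux_nonneg[of r] g_pos[of r] eps_pos by simp

lemma U_antimono:
  assumes "0 \<le> x" "x \<le> y" "y \<le> R"
  shows "U y \<le> U x"
proof (rule DERIV_nonpos_imp_decreasing_open[of x y U])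
  show "\<exists>d. (U has_real_derivative d) (at t) \<and> d \<le> 0" if "x < t" "t < y" for t
    using U_has_derivative_at[of t] U'_nonpos[of t] that assms by auto
qed (use assms in \<open>auto intro: continuous_on_subset[OF U_cont]\<close>)

lemma Ip_le: "Ip \<le> exp (p * c) * K"
proof -
  have "Ip \<le> integral {0..R} (\<lambda>s. s ^ (N - 1) * exp (p * c))"
    unfolding Ip_def using U_le_c p_pos
    by (intro integral_weighted_mono) (auto intro!: continuous_intros U_cont)
  then show ?thesis
    unfolding integral_weighted_const by (simp add: mult.commute)
qed

lemma K_m_ge_A: "A \<le> K * m"
proof -
  have "A / K \<le> A * exp (p * c) / Ip"
    using Ip_le Ip_pos K_pos A_pos by (simp add: field_simps)
  then show ?thesis
    unfolding m_def a_def using K_pos by (simp add: field_simps)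
qed

subsection \<open>Decay away from the boundary\<close>

lemma flux_ge_decay:
  assumes r: "R / 2 \<le> r1" "r1 < r2" "r2 \<le> R"
  shows "lam * (c - U r1) * (r2 - r1) \<le> flux r2"
proof -
  obtain \<xi> where \<xi>: "r1 < \<xi>" "\<xi> < r2" "flux r2 - flux r1 = source \<xi> * (r2 - r1)"
    using mvt_has_real_derivative[OF r(2) continuous_on_subset[OF flux_cont], of source]
      r R_pos flux_has_derivative by auto
  have \<xi>_in: "\<xi> \<in> {0..R}" and r1_in: "r1 \<in> {0..R}"
    using \<xi> r R_pos by auto
  have "lam * (c - U r1) = ((R/2) ^ (N - 1) * A) * (q * (c - U r1))"
    unfolding lam_def by simp
  also have "\<dots> \<le> (\<xi> ^ (N - 1) * (K * m)) * (q * (c - U \<xi>))"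
    using \<xi> r R_pos K_m_ge_A U_antimono[of r1 \<xi>] U_le_c[OF r1_in] q_pos A_pos
    by (intro mult_mono power_mono) auto
  also have "\<dots> \<le> source \<xi>"
    using source_ge_linear[OF \<xi>_in] by (simp add: mult.assoc)
  finally have "lam * (c - U r1) * (r2 - r1) \<le> source \<xi> * (r2 - r1)"
    using r by (intro mult_right_mono) auto
  then show ?thesis
    using \<xi> flux_nonneg[OF r1_in] by linarith
qed

lemma flux_mul_le_drop:
  assumes r: "R / 2 \<le> r2" "r2 < r3" "r3 \<le> R"
  shows "flux r2 * (r3 - r2) \<le> \<epsilon>\<^sup>2 * wmax * (U r2 - U r3)"
proof -
  obtain \<eta> where \<eta>: "r2 < \<eta>" "\<eta> < r3" "U r3 - U r2 = U' \<eta> * (r3 - r2)"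
    using mvt_has_real_derivative[OF r(2) continuous_on_subset[OF U_cont], of U']
      r R_pos U_has_derivative_at by auto
  have \<eta>_in: "\<eta> \<in> {R/2..R}"
    using \<eta> r by auto
  have "flux r2 * (r3 - r2) \<le> flux \<eta> * (r3 - r2)"
    using flux_mono[of r2 \<eta>] \<eta> r R_pos by (intro mult_right_mono) auto
  also have "\<dots> = \<epsilon>\<^sup>2 * (\<eta> ^ (N - 1) * g \<eta>) * (U r2 - U r3)"
    using U'_eq_flux[of \<eta>] \<eta> r R_pos g_pos[of \<eta>] eps_pos by (simp add: field_simps)
  also have "\<dots> \<le> \<epsilon>\<^sup>2 * wmax * (U r2 - U r3)"
    using weight_bounds(2)[OF \<eta>_in] U_antimono[of r2 r3] r R_pos
    by (intro mult_right_mono mult_left_mono) auto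
  finally show ?thesis .
qed

text \<open>Comparison with the linearised equation \<open>\<epsilon>\<^sup>2 V'' \<approx> V\<close> for \<open>V = c - U\<close>:
  over two steps of length \<open>L\<close> the deficit \<open>c - U\<close> shrinks by the factor \<open>\<epsilon>\<^sup>2 wmax / (lam L\<^sup>2)\<close>.\<close>

lemma decay_step:
  assumes "R / 2 \<le> r" "L > 0" "r + 2 * L \<le> R"
  shows "lam * L\<^sup>2 * (c - U r) \<le> \<epsilon>\<^sup>2 * wmax * (c - U (r + 2 * L))"
proof -
  have "lam * L\<^sup>2 * (c - U r) = lam * (c - U r) * (r + L - r) * (r + 2 * L - (r + L))"
    by (simp add: power2_eq_square)
  also have "\<dots> \<le> flux (r + L) * (r + 2 * L - (r + L))"
    using flux_ge_decay[of r "r + L"] assms by (intro mult_right_mono) auto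
  also have "\<dots> \<le> \<epsilon>\<^sup>2 * wmax * (U (r + L) - U (r + 2 * L))"
    using assms by (intro flux_mul_le_drop) auto
  also have "\<dots> \<le> \<epsilon>\<^sup>2 * wmax * (c - U (r + 2 * L))"
    using U_le_c[of "r + L"] assms R_pos wmax_pos by (intro mult_left_mono) auto
  finally show ?thesis .
qed

lemma decay_iterate:
  assumes "L > 0" "R / 2 \<le> R - 2 * real k * L"
  shows "(lam * L\<^sup>2) ^ k * (c - U (R - 2 * real k * L)) \<le> (\<epsilon>\<^sup>2 * wmax) ^ k * (c - U R)"
  using assms(2)
proof (induction k)
  case (Suc k)
  define r where "r = R - 2 * real (Suc k) * L"
  have "R / 2 \<le> r" "r + 2 * L \<le> R"
    using Suc.prems assms(1) by (auto simp: r_def algebra_simps)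
  then have "lam * L\<^sup>2 * (c - U r) \<le> \<epsilon>\<^sup>2 * wmax * (c - U (r + 2 * L))"
    using decay_step assms(1) by blast
  moreover have "r + 2 * L = R - 2 * real k * L"
    by (simp add: r_def algebra_simps)
  ultimately have step: "lam * L\<^sup>2 * (c - U r) \<le> \<epsilon>\<^sup>2 * wmax * (c - U (R - 2 * real k * L))"
    by simp
  have IH: "(lam * L\<^sup>2) ^ k * (c - U (R - 2 * real k * L)) \<le> (\<epsilon>\<^sup>2 * wmax) ^ k * (c - U R)"
    using Suc.IH Suc.prems assms(1) by (simp add: algebra_simps)
  have "(lam * L\<^sup>2) ^ Suc k * (c - U r) = (lam * L\<^sup>2) ^ k * (lam * L\<^sup>2 * (c - U r))"
    by (simp add: mult_ac)
  also have "\<dots> \<le> (lam * L\<^sup>2) ^ k * (\<epsilon>\<^sup>2 * wmax * (c - U (R - 2 * real k * L)))"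
    using step lam_pos by (intro mult_left_mono) auto
  also have "\<dots> \<le> \<epsilon>\<^sup>2 * wmax * ((\<epsilon>\<^sup>2 * wmax) ^ k * (c - U R))"
    using mult_left_mono[OF IH, of "\<epsilon>\<^sup>2 * wmax"] wmax_pos by (simp add: mult_ac)
  also have "\<dots> = (\<epsilon>\<^sup>2 * wmax) ^ Suc k * (c - U R)"
    by (simp add: mult_ac)
  finally show ?case unfolding r_def .
qed simp

subsection \<open>The boundary layer\<close>

lemma U_drop_near_R:
  assumes "R / 2 \<le> s" "s \<le> R"
  shows "\<epsilon>\<^sup>2 * (U s - U R) \<le> slope * (R - s)"
proof (cases "s = R")
  case False
  then have "s < R" using assms by simp
  then obtain \<xi> where \<xi>: "s < \<xi>" "\<xi> < R" "U R - U s = U' \<xi> * (R - s)"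
    using mvt_has_real_derivative[of s R U U'] continuous_on_subset[OF U_cont] assms R_pos
      U_has_derivative_at by auto
  have \<xi>_in: "\<xi> \<in> {R/2..R}"
    using \<xi> assms by auto
  have w: "wmin \<le> \<xi> ^ (N - 1) * g \<xi>"
    using weight_bounds(1)[OF \<xi>_in] .
  have "\<epsilon>\<^sup>2 * (U s - U R) = flux \<xi> / (\<xi> ^ (N - 1) * g \<xi>) * (R - s)"
    using U'_eq_flux[of \<xi>] \<xi> assms R_pos g_pos[of \<xi>] eps_pos by (simp add: field_simps)
  also have "\<dots> \<le> slope * (R - s)"
    unfolding slope_def using flux_le[of \<xi>] flux_nonneg[of \<xi>] \<xi>_in R_pos w wmin_pos \<xi>
    by (intro mult_right_mono frac_le) auto
  finally show ?thesis .
qed simp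

text \<open>In the layer of width \<open>\<epsilon>\<^sup>2 / slope\<close> at \<open>R\<close> the function \<open>U\<close> varies by at most \<open>1\<close>,
  while the flux can grow by at most \<open>K * (B - A)\<close> across it.\<close>

lemma boundary_layer:
  assumes small: "\<epsilon>\<^sup>2 / slope \<le> R / 2"
  shows "exp (q * (c - U R - 1)) \<le> 1 + C_layer / \<epsilon>\<^sup>2"
proof -
  define t where "t = \<epsilon>\<^sup>2 / slope"
  have t: "t > 0" "t \<le> R / 2"
    using eps_pos slope_pos small by (auto simp: t_def)
  obtain \<eta> where \<eta>: "R - t < \<eta>" "\<eta> < R" "flux R - flux (R - t) = source \<eta> * (R - (R - t))"
    using mvt_has_real_derivative[of "R - t" R flux source] continuous_on_subset[OF flux_cont]
      t R_pos flux_has_derivative by auto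
  have \<eta>_in: "\<eta> \<in> {0..R}"
    using \<eta> t by auto
  define E where "E = exp (q * (c - U R - 1))"
  have "\<epsilon>\<^sup>2 * (U \<eta> - U R) \<le> \<epsilon>\<^sup>2"
    using U_drop_near_R[of \<eta>] \<eta> t slope_pos by (simp add: t_def field_simps)
  then have "U \<eta> - U R \<le> 1"
    using eps_pos by simp
  then have E: "E \<le> exp (q * (c - U \<eta>))"
    unfolding E_def using q_pos by (auto intro: mult_left_mono)
  show ?thesis
  proof (cases "E \<le> 1")
    case True
    then show ?thesis
      using C_layer_nonneg eps_pos unfolding E_def by (smt (verit) divide_nonneg_pos zero_less_power)
  next
    case False
    have "(R/2) ^ (N - 1) * A * (E - 1) \<le> \<eta> ^ (N - 1) * (K * m) * (exp (q * (c - U \<eta>)) - 1)"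
      using \<eta> t K_m_ge_A E False A_pos by (intro mult_mono power_mono) auto
    also have "\<dots> \<le> source \<eta>"
      using source_ge_exp[OF \<eta>_in] by (simp add: mult.assoc)
    finally have "(R/2) ^ (N - 1) * A * (E - 1) * t \<le> source \<eta> * t"
      using t by (intro mult_right_mono) auto
    also have "\<dots> \<le> K * (B - A)"
      using \<eta> flux_R flux_nonneg[of "R - t"] t by simp
    finally have "E - 1 \<le> K * (B - A) / ((R/2) ^ (N - 1) * A * t)"
      using t R_pos A_pos by (simp add: field_simps)
    also have "\<dots> = C_layer / \<epsilon>\<^sup>2"
      unfolding C_layer_def t_def using slope_pos eps_pos R_pos A_pos by (simp add: field_simps)
    finally show ?thesis
      unfolding E_def by simp
  qed
qed

lemma c_minus_U_R_le_log:
  assumes "\<epsilon> \<le> exp (- 1)" "\<epsilon>\<^sup>2 / slope \<le> R / 2"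
  shows "c - U R \<le> C_log * ln (1 / \<epsilon>)"
proof -
  define l where "l = ln (1 / \<epsilon>)"
  have l: "1 \<le> l"
    using assms(1) eps_pos ln_le_cancel_iff[of \<epsilon> "exp (- 1)"] by (simp add: l_def ln_div)
  have "exp (- 1 :: real) \<le> 1"
    by simp
  then have "\<epsilon> \<le> 1"
    using assms(1) by linarith
  then have "\<epsilon>\<^sup>2 \<le> 1"
    using eps_pos by (simp add: power_le_one)
  then have "exp (q * (c - U R - 1)) \<le> (1 + C_layer) / \<epsilon>\<^sup>2"
    using boundary_layer[OF assms(2)] eps_pos C_layer_nonneg by (simp add: field_simps)
  then have "q * (c - U R - 1) \<le> ln ((1 + C_layer) / \<epsilon>\<^sup>2)"
    using C_layer_nonneg eps_pos by (subst ln_ge_iff) auto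
  also have "\<dots> = ln (1 + C_layer) + 2 * l"
    using C_layer_nonneg eps_pos by (simp add: l_def ln_div ln_realpow)
  finally have "c - U R \<le> 1 + ln (1 + C_layer) / q + 2 / q * l"
    using q_pos by (simp add: field_simps)
  moreover have "ln (1 + C_layer) / q \<le> ln (1 + C_layer) / q * l"
    using mult_left_mono[OF l, of "ln (1 + C_layer) / q"] C_layer_nonneg q_pos by simp
  ultimately have "c - U R \<le> l + ln (1 + C_layer) / q * l + 2 / q * l"
    using l by linarith
  then show ?thesis
    by (simp add: C_log_def l_def algebra_simps)
qed

subsection \<open>The balance level \<open>c\<close> and the two integrals\<close>

lemma integral_c_minus_U: "integral {0..R} (\<lambda>s. s ^ (N - 1) * (c - U s)) = K * c"
proof -
  have "integral {0..R} (\<lambda>s. s ^ (N - 1) * c - s ^ (N - 1) * U s)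
      = integral {0..R} (\<lambda>s. s ^ (N - 1) * c) - integral {0..R} (\<lambda>s. s ^ (N - 1) * U s)"
    by (intro integral_diff integrable_weighted U_cont continuous_on_const)
  then show ?thesis
    using mean_zero integral_weighted_const by (simp add: right_diff_distrib)
qed

lemma c_nonneg: "c \<ge> 0"
proof -
  have "0 \<le> integral {0..R} (\<lambda>s. s ^ (N - 1) * (c - U s))"
    using U_le_c by (intro integral_nonneg integrable_weighted) (auto intro!: continuous_intros U_cont)
  then show ?thesis
    using K_pos integral_c_minus_U by (simp add: zero_le_mult_iff)
qed

lemma integral_c_minus_U_le:
  assumes "0 \<le> x" "x \<le> y" "y \<le> R" "\<And>s. s \<in> {x..y} \<Longrightarrow> c - U s \<le> M"
  shows "integral {x..y} (\<lambda>s. s ^ (N - 1) * (c - U s)) \<le> (y - x) * (R ^ (N - 1) * M)"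
proof -
  have "integral {x..y} (\<lambda>s. s ^ (N - 1) * (c - U s)) \<le> integral {x..y} (\<lambda>_. R ^ (N - 1) * M)"
  proof (rule integral_le)
    show "(\<lambda>s. s ^ (N - 1) * (c - U s)) integrable_on {x..y}"
      using assms
      by (intro integrable_continuous_interval continuous_intros continuous_on_subset[OF U_cont]) auto
    show "s ^ (N - 1) * (c - U s) \<le> R ^ (N - 1) * M" if "s \<in> {x..y}" for s
      using that assms U_le_c[of s] by (intro mult_mono power_mono) auto
  qed auto
  then show ?thesis
    using assms by (simp add: mult_ac)
qed

lemma excess_bound:
  assumes L: "L > 0" and k: "R / 2 \<le> R - 2 * real k * L"
  shows "K * c \<le> R ^ (N - 1) * (c - U R) * (R * (\<epsilon>\<^sup>2 * wmax / (lam * L\<^sup>2)) ^ k + 2 * real k * L)"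
proof -
  define r where "r = R - 2 * real k * L"
  define f where "f = (\<lambda>s. s ^ (N - 1) * (c - U s))"
  have r: "0 \<le> r" "r \<le> R"
    using k L R_pos by (auto simp: r_def)
  have "(lam * L\<^sup>2) ^ k * (c - U r) \<le> (\<epsilon>\<^sup>2 * wmax) ^ k * (c - U R)"
    using decay_iterate[OF L k] by (simp add: r_def)
  then have decayed: "c - U r \<le> (\<epsilon>\<^sup>2 * wmax / (lam * L\<^sup>2)) ^ k * (c - U R)"
    using lam_pos L by (simp add: power_divide field_simps)
  have "K * c = integral {0..R} f"
    using integral_c_minus_U by (simp add: f_def)
  also have "\<dots> = integral {0..r} f + integral {r..R} f"
    using r unfolding f_def
    by (intro Henstock_Kurzweil_Integration.integral_combine[symmetric] integrable_weighted
        continuous_intros U_cont) auto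
  also have "\<dots> \<le> (r - 0) * (R ^ (N - 1) * ((\<epsilon>\<^sup>2 * wmax / (lam * L\<^sup>2)) ^ k * (c - U R)))
      + (R - r) * (R ^ (N - 1) * (c - U R))"
    unfolding f_def
  proof (intro add_mono integral_c_minus_U_le)
    show "c - U s \<le> (\<epsilon>\<^sup>2 * wmax / (lam * L\<^sup>2)) ^ k * (c - U R)" if "s \<in> {0..r}" for s
      using U_antimono[of s r] that r decayed by auto
    show "c - U s \<le> c - U R" if "s \<in> {r..R}" for s
      using U_antimono[of s R] that r by auto
  qed (use r in auto)
  also have "\<dots> \<le> R * (R ^ (N - 1) * ((\<epsilon>\<^sup>2 * wmax / (lam * L\<^sup>2)) ^ k * (c - U R)))
      + (R - r) * (R ^ (N - 1) * (c - U R))"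
    using r U_le_c[of R] R_pos lam_pos wmax_pos L by (intro add_mono mult_right_mono) auto
  also have "\<dots> = R ^ (N - 1) * (c - U R) * (R * (\<epsilon>\<^sup>2 * wmax / (lam * L\<^sup>2)) ^ k + 2 * real k * L)"
    by (simp add: r_def algebra_simps)
  finally show ?thesis .
qed

lemma c_le:
  assumes "0 < \<kappa>" "\<kappa> \<le> real k * (2 - 2 * \<kappa>)" "\<epsilon> \<le> exp (- 1)" "\<epsilon>\<^sup>2 / slope \<le> R / 2"
    and "2 * real k * \<epsilon> powr \<kappa> \<le> R / 2"
  shows "c \<le> C_excess k * (\<epsilon> powr \<kappa> * ln (1 / \<epsilon>))"
proof -
  define L where "L = \<epsilon> powr \<kappa>"
  define l where "l = ln (1 / \<epsilon>)"
  have L: "L > 0" "R / 2 \<le> R - 2 * real k * L"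
    using assms eps_pos by (auto simp: L_def)
  have "exp (- 1 :: real) < 1"
    by simp
  then have \<epsilon>1: "\<epsilon> < 1"
    using assms(3) by linarith
  have "\<epsilon>\<^sup>2 * wmax / (lam * L\<^sup>2) = wmax / lam * (\<epsilon>\<^sup>2 / L\<^sup>2)"
    by simp
  then have "(\<epsilon>\<^sup>2 * wmax / (lam * L\<^sup>2)) ^ k = (wmax / lam) ^ k * (\<epsilon>\<^sup>2 / L\<^sup>2) ^ k"
    by (simp only: power_mult_distrib)
  also have "\<dots> \<le> (wmax / lam) ^ k * L"
    using power_ratio_powr_le[OF eps_pos \<epsilon>1 assms(2)] wmax_pos lam_pos
    by (intro mult_left_mono) (auto simp: L_def)
  finally have "R * (\<epsilon>\<^sup>2 * wmax / (lam * L\<^sup>2)) ^ k + 2 * real k * L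
      \<le> (R * (wmax / lam) ^ k + 2 * real k) * L"
    using R_pos by (simp add: distrib_right mult.assoc)
  moreover have "0 \<le> c - U R" "c - U R \<le> C_log * l"
    using U_le_c[of R] R_pos c_minus_U_R_le_log[OF assms(3,4)] by (auto simp: l_def)
  ultimately have "R ^ (N - 1) * (c - U R) * (R * (\<epsilon>\<^sup>2 * wmax / (lam * L\<^sup>2)) ^ k + 2 * real k * L)
      \<le> R ^ (N - 1) * (C_log * l) * ((R * (wmax / lam) ^ k + 2 * real k) * L)"
    using R_pos L lam_pos wmax_pos eps_pos by (intro mult_mono mult_left_mono) auto
  also have "\<dots> = K * (C_excess k * (L * l))"
    unfolding C_excess_def using K_pos by simp
  finally have "K * c \<le> K * (C_excess k * (L * l))"
    using excess_bound[OF L] by linarith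
  then show ?thesis
    using K_pos by (simp add: L_def l_def)
qed

lemma Ip_ge: "exp (p * c) * (1 - p * c) * K \<le> Ip"
proof -
  define \<alpha> where "\<alpha> = exp (p * c) * (1 - p * c)"
  define \<beta> where "\<beta> = exp (p * c) * p"
  have "integral {0..R} (\<lambda>s. s ^ (N - 1) * (\<alpha> + \<beta> * U s))
      = integral {0..R} (\<lambda>s. s ^ (N - 1) * \<alpha> + \<beta> * (s ^ (N - 1) * U s))"
    by (simp add: algebra_simps)
  also have "\<dots> = integral {0..R} (\<lambda>s. s ^ (N - 1) * \<alpha>) + integral {0..R} (\<lambda>s. \<beta> * (s ^ (N - 1) * U s))"
    by (intro integral_add integrable_weighted integrable_on_mult_right U_cont continuous_on_const)
  also have "\<dots> = \<alpha> * K"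
    using mean_zero integral_weighted_const by simp
  finally have "\<alpha> * K = integral {0..R} (\<lambda>s. s ^ (N - 1) * (\<alpha> + \<beta> * U s))" ..
  also have "\<dots> \<le> Ip"
    unfolding Ip_def
  proof (rule integral_weighted_mono)
    fix s
    have "exp (p * c) * (1 - p * (c - U s)) \<le> exp (p * c) * exp (- (p * (c - U s)))"
      using exp_ge_add_one_self[of "- (p * (c - U s))"] by (intro mult_left_mono) auto
    then show "\<alpha> + \<beta> * U s \<le> exp (p * U s)"
      by (simp add: \<alpha>_def \<beta>_def exp_add[symmetric] algebra_simps)
  qed (auto intro!: continuous_intros U_cont)
  finally show ?thesis
    by (simp add: \<alpha>_def)
qed

lemma Ip_close:
  assumes "p * c \<le> 1 / 2"
  shows "\<bar>Ip - K\<bar> \<le> 2 * (p * K * c)"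
proof -
  have exp_pc: "1 \<le> exp (p * c)" "exp (p * c) \<le> 1 + 2 * (p * c)"
    using real_exp_bound_lemma[of "p * c"] c_nonneg p_pos assms by auto
  have "Ip - K \<le> (exp (p * c) - 1) * K"
    using Ip_le by (simp add: left_diff_distrib)
  also have "\<dots> \<le> (2 * (p * c)) * K"
    using exp_pc K_pos by (intro mult_right_mono) auto
  finally have up: "Ip - K \<le> 2 * (p * K * c)"
    by (simp add: mult_ac)
  have "(1 - p * c) * K \<le> exp (p * c) * (1 - p * c) * K"
    using exp_pc assms K_pos by (intro mult_right_mono) auto
  then have low: "- (p * K * c) \<le> Ip - K"
    using Ip_ge by (simp add: algebra_simps)
  have "0 \<le> p * K * c"
    using p_pos K_pos c_nonneg by simp
  then show ?thesis
    using up low by linarith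
qed

lemma Iq_eq: "Iq = B / A * (Ip * exp (- ((p + q) * c)))"
proof -
  have "Iq = B / b"
    using Iq_pos A_pos A_less_B by (simp add: b_def)
  also have "\<dots> = B / A * (Ip / exp ((p + q) * c))"
    unfolding b_eq m_def a_def using Ip_pos A_pos by (simp add: distrib_right exp_add)
  also have "\<dots> = B / A * (Ip * exp (- ((p + q) * c)))"
    by (simp add: exp_minus divide_inverse)
  finally show ?thesis .
qed

lemma Iq_close:
  assumes "p * c \<le> 1 / 2"
  shows "\<bar>Iq - B * K / A\<bar> \<le> B / A * ((4 * p + 2 * q) * K * c)"
proof -
  define y where "y = exp (- ((p + q) * c))"
  have y: "y \<le> 1" "1 - (p + q) * c \<le> y"
    using c_nonneg p_pos q_pos exp_ge_add_one_self[of "- ((p + q) * c)"] by (auto simp: y_def)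
  have "exp (p * c) \<le> 2"
    using real_exp_bound_lemma[of "p * c"] c_nonneg p_pos assms by auto
  then have "Ip \<le> 2 * K"
    using Ip_le mult_right_mono[of "exp (p * c)" 2 K] K_pos by linarith
  then have "(p + q) * c * Ip \<le> 2 * (p * (K * c)) + 2 * (q * (K * c))"
    using c_nonneg p_pos q_pos mult_left_mono[of Ip "2 * K" "(p + q) * c"] by (simp add: algebra_simps)
  moreover have "Ip * y \<le> Ip" "Ip - (p + q) * c * Ip \<le> Ip * y"
    using Ip_pos mult_left_mono[OF y(1), of Ip] mult_left_mono[OF y(2), of Ip] by (auto simp: algebra_simps)
  moreover have "\<bar>Ip - K\<bar> \<le> 2 * (p * (K * c))" "0 \<le> p * (K * c)" "0 \<le> q * (K * c)"
    using Ip_close[OF assms] p_pos q_pos K_pos c_nonneg by (auto simp: mult.assoc)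
  ultimately have "\<bar>Ip * y - K\<bar> \<le> 4 * (p * (K * c)) + 2 * (q * (K * c))"
    by (simp only: abs_le_iff) (elim conjE; intro conjI; linarith)
  also have "\<dots> = (4 * p + 2 * q) * K * c"
    by (simp add: algebra_simps)
  finally have bound: "\<bar>Ip * y - K\<bar> \<le> (4 * p + 2 * q) * K * c" .
  have "Iq - B * K / A = B / A * (Ip * y - K)"
    using A_pos unfolding Iq_eq y_def by (simp add: algebra_simps)
  then have "\<bar>Iq - B * K / A\<bar> = B / A * \<bar>Ip * y - K\<bar>"
    using A_pos A_less_B by (simp add: abs_mult)
  also have "\<dots> \<le> B / A * ((4 * p + 2 * q) * K * c)"
    using bound A_pos A_less_B by (intro mult_left_mono) auto
  finally show ?thesis .
qed

lemma integrals_close: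
  assumes "0 < \<kappa>" "\<kappa> \<le> real k * (2 - 2 * \<kappa>)" "\<epsilon> \<le> exp (- 1)" "\<epsilon>\<^sup>2 / slope \<le> R / 2"
    and "2 * real k * \<epsilon> powr \<kappa> \<le> R / 2"
    and "p * C_excess k * (\<epsilon> powr \<kappa> * ln (1 / \<epsilon>)) \<le> 1 / 2"
  shows "\<bar>Ip - K\<bar> + \<bar>Iq - B * K / A\<bar> \<le> C_final k * (\<epsilon> powr \<kappa> * ln (1 / \<epsilon>))"
proof -
  have c: "c \<le> C_excess k * (\<epsilon> powr \<kappa> * ln (1 / \<epsilon>))"
    using c_le assms(1-5) .
  then have "p * c \<le> p * C_excess k * (\<epsilon> powr \<kappa> * ln (1 / \<epsilon>))"
    using mult_left_mono[OF c, of p] p_pos by (simp add: mult.assoc)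
  then have "p * c \<le> 1 / 2"
    using assms(6) by linarith
  then have "\<bar>Ip - K\<bar> + \<bar>Iq - B * K / A\<bar> \<le> (2 * p + B / A * (4 * p + 2 * q)) * K * c"
    using Ip_close Iq_close by (simp add: algebra_simps)
  also have "\<dots> \<le> (2 * p + B / A * (4 * p + 2 * q)) * K * (C_excess k * (\<epsilon> powr \<kappa> * ln (1 / \<epsilon>)))"
    using c p_pos q_pos A_pos A_less_B K_pos by (intro mult_left_mono) auto
  finally show ?thesis
    by (simp add: C_final_def mult_ac)
qed

end

section \<open>The limit \<open>\<epsilon> \<rightarrow> 0\<close>\<close>

context radial_data
begin

lemma solves_Nstar_imp_radial_solution:
  assumes "solves_Nstar N R g A B p q \<epsilon> U" "\<epsilon> > 0"
  obtains U' where "radial_solution N R A B p q gmin gmax g g' \<epsilon> U U' (deriv (deriv U))"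
proof -
  from assms(1) obtain U' where
    U': "\<forall>x\<in>{0..R}. (U has_real_derivative U' x) (at x within {0..R})" "continuous_on {0..R} U'"
      "U' 0 = 0" "U' R = R * (A - B) / (\<epsilon>\<^sup>2 * real N * g R)"
    and smooth: "smooth_on {0<..<R} U"
    and rest: "integral {0..R} (\<lambda>s. s ^ (N - 1) * U s) = 0"
      "\<forall>r\<in>{0<..<R}. \<epsilon>\<^sup>2 * g r * (deriv (deriv U) r + ((real N - 1) / r + deriv g r / g r) * deriv U r)
       = R ^ N / real N *
         (A * exp (p * U r) / integral {0..R} (\<lambda>s. s ^ (N - 1) * exp (p * U s))
          - B * exp (- q * U r) / integral {0..R} (\<lambda>s. s ^ (N - 1) * exp (- q * U s)))"
    unfolding solves_Nstar_def by blast
  have U'_at: "(U has_real_derivative U' r) (at r)" if "r \<in> {0<..<R}" for r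
    using U'(1)[rule_format, of r] that by (simp add: at_within_Icc_at)
  have deriv_U: "deriv U r = U' r" if "r \<in> {0<..<R}" for r
    using U'_at[OF that] by (rule DERIV_imp_deriv)
  have deriv_g: "deriv g r = g' r" if "r \<in> {0<..<R}" for r
    using g_deriv[of r] that by (simp add: at_within_Icc_at DERIV_imp_deriv)
  have U'': "(U' has_real_derivative deriv (deriv U) r) (at r)" if "r \<in> {0<..<R}" for r
    using smooth_on_open_deriv(2)[OF smooth _ that] deriv_U that
    by (auto intro: has_field_derivative_transform_within_open[where S="{0<..<R}"])
  show ?thesis
  proof (rule that, intro radial_solution.intro radial_solution_axioms.intro radial_data_axioms)
    show "\<And>r. r \<in> {0<..<R} \<Longrightarrow> \<epsilon>\<^sup>2 * g r * (deriv (deriv U) r + ((real N - 1) / r + g' r / g r) * U' r)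
       = R ^ N / real N *
         (A * exp (p * U r) / integral {0..R} (\<lambda>s. s ^ (N - 1) * exp (p * U s))
          - B * exp (- q * U r) / integral {0..R} (\<lambda>s. s ^ (N - 1) * exp (- q * U s)))"
      using rest(2) deriv_U deriv_g by simp
  qed (use U' U'' rest(1) assms(2) in auto)
qed

lemma eventually_small:
  assumes "0 < \<kappa>"
  shows "\<forall>\<^sub>F \<epsilon> in at_right 0. 0 < \<epsilon> \<and> \<epsilon> \<le> exp (- 1) \<and> \<epsilon>\<^sup>2 / slope \<le> R / 2
    \<and> 2 * real k * \<epsilon> powr \<kappa> \<le> R / 2 \<and> p * C_excess k * (\<epsilon> powr \<kappa> * ln (1 / \<epsilon>)) \<le> 1 / 2"
proof -
  have "((\<lambda>\<epsilon>::real. \<epsilon>\<^sup>2) \<longlongrightarrow> 0) (at_right 0)" "((\<lambda>\<epsilon>::real. \<epsilon> powr \<kappa>) \<longlongrightarrow> 0) (at_right 0)"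
    "((\<lambda>\<epsilon>::real. \<epsilon> powr \<kappa> * ln (1 / \<epsilon>)) \<longlongrightarrow> 0) (at_right 0)"
    using assms by real_asymp+
  then have lim: "((\<lambda>\<epsilon>::real. \<epsilon>\<^sup>2 / slope) \<longlongrightarrow> 0) (at_right 0)"
    "((\<lambda>\<epsilon>::real. 2 * real k * \<epsilon> powr \<kappa>) \<longlongrightarrow> 0) (at_right 0)"
    "((\<lambda>\<epsilon>::real. p * C_excess k * (\<epsilon> powr \<kappa> * ln (1 / \<epsilon>))) \<longlongrightarrow> 0) (at_right 0)"
    by (auto intro: tendsto_divide_zero tendsto_mult_right_zero)
  have "\<forall>\<^sub>F \<epsilon> in at_right 0. \<epsilon> < exp (- 1 :: real)"
    by (rule order_tendstoD(2)[OF tendsto_ident_at]) simp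
  moreover have "\<forall>\<^sub>F \<epsilon> in at_right 0. \<epsilon>\<^sup>2 / slope < R / 2"
    by (rule order_tendstoD(2)[OF lim(1)]) (use R_pos in simp)
  moreover have "\<forall>\<^sub>F \<epsilon> in at_right 0. 2 * real k * \<epsilon> powr \<kappa> < R / 2"
    by (rule order_tendstoD(2)[OF lim(2)]) (use R_pos in simp)
  moreover have "\<forall>\<^sub>F \<epsilon> in at_right 0. p * C_excess k * (\<epsilon> powr \<kappa> * ln (1 / \<epsilon>)) < 1 / 2"
    by (rule order_tendstoD(2)[OF lim(3)]) simp
  ultimately show ?thesis
    using eventually_at_right_less[of 0] by eventually_elim auto
qed

lemma integrals_close_for_solution:
  assumes "solves_Nstar N R g A B p q \<epsilon> U" "0 < \<kappa>" "\<kappa> \<le> real k * (2 - 2 * \<kappa>)"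
    and small: "0 < \<epsilon> \<and> \<epsilon> \<le> exp (- 1) \<and> \<epsilon>\<^sup>2 / slope \<le> R / 2
      \<and> 2 * real k * \<epsilon> powr \<kappa> \<le> R / 2 \<and> p * C_excess k * (\<epsilon> powr \<kappa> * ln (1 / \<epsilon>)) \<le> 1 / 2"
  shows "\<bar>integral {0..R} (\<lambda>s. s ^ (N - 1) * exp (p * U s)) - R ^ N / real N\<bar>
       + \<bar>integral {0..R} (\<lambda>s. s ^ (N - 1) * exp (- q * U s)) - B * R ^ N / (A * real N)\<bar>
       \<le> C_final k * \<epsilon> powr \<kappa> * ln (1 / \<epsilon>)"
proof -
  obtain U' where "radial_solution N R A B p q gmin gmax g g' \<epsilon> U U' (deriv (deriv U))"
    using solves_Nstar_imp_radial_solution assms(1) small by blast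
  then interpret sol: radial_solution N R A B p q gmin gmax g g' \<epsilon> U U' "deriv (deriv U)" .
  have "\<bar>sol.Ip - K\<bar> + \<bar>sol.Iq - B * K / A\<bar> \<le> C_final k * \<epsilon> powr \<kappa> * ln (1 / \<epsilon>)"
    using sol.integrals_close[OF assms(2,3)] small by (simp add: mult.assoc)
  moreover have "B * R ^ N / (A * real N) = B * K / A"
    by (simp add: K_def)
  ultimately show ?thesis
    unfolding K_def[symmetric] by (simp only: sol.Ip_def sol.Iq_def)
qed

lemma integrals_close_eventually:
  assumes "0 < \<kappa>" "\<kappa> < 1"
  shows "\<exists>C>0. \<forall>\<^sub>F \<epsilon> in at_right 0. \<forall>U. solves_Nstar N R g A B p q \<epsilon> U \<longrightarrow>
       \<bar>integral {0..R} (\<lambda>s. s ^ (N - 1) * exp (p * U s)) - R ^ N / real N\<bar>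
       + \<bar>integral {0..R} (\<lambda>s. s ^ (N - 1) * exp (- q * U s)) - B * R ^ N / (A * real N)\<bar>
       \<le> C * \<epsilon> powr \<kappa> * ln (1 / \<epsilon>)"
proof -
  define k where "k = nat \<lceil>\<kappa> / (2 - 2 * \<kappa>)\<rceil>"
  have "\<kappa> / (2 - 2 * \<kappa>) \<le> real k"
    unfolding k_def by (rule of_nat_ceiling)
  then have k: "\<kappa> \<le> real k * (2 - 2 * \<kappa>)"
    using assms by (simp add: pos_divide_le_eq)
  have "\<forall>\<^sub>F \<epsilon> in at_right 0. \<forall>U. solves_Nstar N R g A B p q \<epsilon> U \<longrightarrow>
       \<bar>integral {0..R} (\<lambda>s. s ^ (N - 1) * exp (p * U s)) - R ^ N / real N\<bar>
       + \<bar>integral {0..R} (\<lambda>s. s ^ (N - 1) * exp (- q * U s)) - B * R ^ N / (A * real N)\<bar>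
       \<le> C_final k * \<epsilon> powr \<kappa> * ln (1 / \<epsilon>)"
    using eventually_small[OF assms(1), of k]
    by eventually_elim (use integrals_close_for_solution[OF _ assms(1) k] in blast)
  then show ?thesis
    using C_final_pos by blast
qed

end

theorem lemma3p9:
  fixes N :: nat and R A B p q :: real and g :: "real \<Rightarrow> real"
  assumes "N \<ge> 2" and "R > 0"
    and "smooth_on {0..R} g" and "\<forall>x\<in>{0..R}. g x > 0"
    and "0 < A" and "A < B" and "p > 0" and "q > 0"
  shows "\<forall>\<kappa>. 0 < \<kappa> \<and> \<kappa> < 1 \<longrightarrow>
    (\<exists>C>0. \<forall>\<^sub>F \<epsilon> in at_right 0. \<forall>U. solves_Nstar N R g A B p q \<epsilon> U \<longrightarrow>
       \<bar>integral {0..R} (\<lambda>s. s ^ (N - 1) * exp (p * U s)) - R ^ N / real N\<bar>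
       + \<bar>integral {0..R} (\<lambda>s. s ^ (N - 1) * exp (- q * U s)) - B * R ^ N / (A * real N)\<bar>
       \<le> C * \<epsilon> powr \<kappa> * ln (1 / \<epsilon>))"
proof -
  obtain g' where g': "\<And>x. x \<in> {0..R} \<Longrightarrow> (g has_real_derivative g' x) (at x within {0..R})"
    using smooth_on_has_real_derivative[OF assms(3)] by blast
  have "continuous_on {0..R} g"
    using g' by (intro DERIV_continuous_on) blast
  obtain x1 where x1: "x1 \<in> {0..R}" "\<And>y. y \<in> {0..R} \<Longrightarrow> g x1 \<le> g y"
    using continuous_attains_inf[OF compact_Icc _ \<open>continuous_on {0..R} g\<close>] assms(2) by auto
  obtain x2 where "x2 \<in> {0..R}" "\<And>y. y \<in> {0..R} \<Longrightarrow> g y \<le> g x2"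
    using continuous_attains_sup[OF compact_Icc _ \<open>continuous_on {0..R} g\<close>] assms(2) by auto
  with x1 interpret radial_data N R A B p q "g x1" "g x2" g g'
    using assms g' by unfold_locales auto
  show ?thesis
    using integrals_close_eventually by blast
qed

end
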